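(* Let $X_\Sigma$ be a projective toric variety. For any $x\in Z(\Sigma)$ and any $D\in\mathrm{Amp}(X_\Sigma)_{\mathbf R}$, there is a unique vector $\lambda^D_x\in\Lambda^D_x$ that is $\chi_D$-adapted to $x$, and $M^D(x)=-\|\lambda^D_x\|$.
   Context: $\Sigma$ complete fan, rays $\Sigma(1)$, generators $u_\rho$, divisors $D_\rho$; primitive collections $C\subset\Sigma(1)$ (not contained in $\sigma(1)$ for any cone $\sigma$, every proper subset is); $Z(\Sigma)=\bigcup_CV(x_\rho:\rho\in C)\subset\mathbf C^{\Sigma(1)}$. $G=\mathrm{Hom}(\mathrm{Cl}(X_\Sigma),\mathbf C^\times)$, $\Gamma(G)=\{b\in\mathbf Z^{\Sigma(1)}:\sum b_\rho u_\rho=0\}$, $\langle\chi_D,b\rangle=\sum a_\rho b_\rho$ for $D=\sum a_\rho D_\rho$, extended $\mathbf R$-linearly; $\Gamma(G)_{\mathbf R}\subset\mathbf R^{\Sigma(1)}$ with restricted standard inner product and norm; $\chi_D^*\in\Gamma(G)_{\mathbf R}$ defined by $(\chi_D^*,v)=\langle\chi_D,v\rangle$. $\mathrm{Amp}(X_\Sigma)_{\mathbf R}$ is the ample cone in $\mathrm{Pic}(X_\Sigma)_{\mathbf R}$. For $x\in\mathbf C^{\Sigma(1)}$, $S_x=\{\rho:x_\rho\ne0\}$, $\sigma_x=\{v\in\Gamma(G)_{\mathbf R}:v_\rho\ge0\ \forall\rho\in S_x\}$; for $Z\subset\Sigma(1)$, $W_Z=\{v\in\Gamma(G)_{\mathbf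 R}:v_\rho=0\ \forall\rho\in Z\}$ and $\mathrm{Proj}_{W_Z}$ is orthogonal projection; $\Lambda^D_x=\{-\mathrm{Proj}_{W_Z}\chi_D^*:Z\subset S_x,\ -\mathrm{Proj}_{W_Z}\chi_D^*\in\sigma_x\}$. $M^D(x)=\inf_{\lambda\in\sigma_x\setminus\{0\}}\langle\chi_D,\lambda\rangle/\|\lambda\|$, and $\lambda\in\Gamma(G)_{\mathbf R}$ is $\chi_D$-adapted to $x$ if $\langle\chi_D,\lambda\rangle/\|\lambda\|=M^D(x)$. *)

theory Defs
  imports "HOL-Analysis.Analysis"
begin

definition lattice_pt :: "real^'n \<Rightarrow> bool" where
  "lattice_pt v \<longleftrightarrow> (\<forall>i. v $ i \<in> \<int>)"

definition gen_cone :: "(real^'n) set \<Rightarrow> (real^'n) set" where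
  "gen_cone S = {(\<Sum>s\<in>S. c s *\<^sub>R s) | c. \<forall>s\<in>S. c s \<ge> 0}"

definition rational_polyhedral_cone :: "(real^'n) set \<Rightarrow> bool" where
  "rational_polyhedral_cone C \<longleftrightarrow>
     (\<exists>S. finite S \<and> (\<forall>s\<in>S. lattice_pt s) \<and> C = gen_cone S)"

definition strongly_convex :: "(real^'n) set \<Rightarrow> bool" where
  "strongly_convex C \<longleftrightarrow> C \<inter> uminus ` C = {0}"

definition is_fan :: "(real^'n) set set \<Rightarrow> bool" where
  "is_fan \<Sigma> \<longleftrightarrow> finite \<Sigma> \<and>
     (\<forall>\<sigma>\<in>\<Sigma>. rational_polyhedral_cone \<sigma> \<and> strongly_convex \<sigma>) \<and>
     (\<forall>\<sigma>\<in>\<Sigma>. \<forall>\<tau>. \<tau> face_of \<sigma> \<and> \<tau> \<noteq> {} \<longrightarrow> \<tau> \<in> \<Sigma>) \<and>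
     (\<forall>\<sigma>\<in>\<Sigma>. \<forall>\<tau>\<in>\<Sigma>. (\<sigma> \<inter> \<tau>) face_of \<sigma> \<and> (\<sigma> \<inter> \<tau>) face_of \<tau>)"

definition complete_fan :: "(real^'n) set set \<Rightarrow> bool" where
  "complete_fan \<Sigma> \<longleftrightarrow> is_fan \<Sigma> \<and> \<Union>\<Sigma> = UNIV"

definition rays :: "(real^'n) set set \<Rightarrow> (real^'n) set set" where
  "rays \<Sigma> = {\<rho>\<in>\<Sigma>. aff_dim \<rho> = 1}"

definition ray_gen :: "(real^'n) set \<Rightarrow> real^'n" where
  "ray_gen \<rho> = (THE v. v \<in> \<rho> \<and> v \<noteq> 0 \<and> lattice_pt v \<and>
      (\<forall>w. w \<in> \<rho> \<and> w \<noteq> 0 \<and> lattice_pt w \<longrightarrow> (\<exists>k::nat. w = real k *\<^sub>R v)))"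

definition cone_rays :: "(real^'n) set set \<Rightarrow> (real^'n) set \<Rightarrow> (real^'n) set set" where
  "cone_rays \<Sigma> \<sigma> = {\<rho>\<in>rays \<Sigma>. \<rho> \<subseteq> \<sigma>}"

definition primitive_collection :: "(real^'n) set set \<Rightarrow> (real^'n) set set \<Rightarrow> bool" where
  "primitive_collection \<Sigma> C \<longleftrightarrow> C \<subseteq> rays \<Sigma> \<and>
     (\<forall>\<sigma>\<in>\<Sigma>. \<not> C \<subseteq> cone_rays \<Sigma> \<sigma>) \<and>
     (\<forall>C'. C' \<subset> C \<longrightarrow> (\<exists>\<sigma>\<in>\<Sigma>. C' \<subseteq> cone_rays \<Sigma> \<sigma>))"

text \<open>Points of C^{\<Sigma>(1)} are functions on rays (values off \<Sigma>(1) are irrelevant).\<close>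
definition unstable_locus :: "(real^'n) set set \<Rightarrow> ((real^'n) set \<Rightarrow> complex) set" where
  "unstable_locus \<Sigma> = {x. \<exists>C. primitive_collection \<Sigma> C \<and> (\<forall>\<rho>\<in>C. x \<rho> = 0)}"

definition maximal_cone :: "(real^'n) set set \<Rightarrow> (real^'n) set \<Rightarrow> bool" where
  "maximal_cone \<Sigma> \<sigma> \<longleftrightarrow> \<sigma> \<in> \<Sigma> \<and> \<not> (\<exists>\<tau>\<in>\<Sigma>. \<sigma> \<subset> \<tau>)"

text \<open>D = \<Sum> a_\<rho> D_\<rho> (real coefficients) is ample iff its support function is
  strictly convex: for each maximal cone \<sigma> there is m_\<sigma> in M_R with
  <m_\<sigma>,u_\<rho>> = -a_\<rho> for \<rho> in \<sigma>(1) and <m_\<sigma>,u_\<rho>> > -a_\<rho> otherwise.\<close>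
definition ample_divisor :: "(real^'n) set set \<Rightarrow> ((real^'n) set \<Rightarrow> real) \<Rightarrow> bool" where
  "ample_divisor \<Sigma> a \<longleftrightarrow>
     (\<forall>\<sigma>. maximal_cone \<Sigma> \<sigma> \<longrightarrow> (\<exists>m::real^'n. \<forall>\<rho>\<in>rays \<Sigma>.
        (\<rho> \<subseteq> \<sigma> \<longrightarrow> m \<bullet> ray_gen \<rho> = - a \<rho>) \<and>
        (\<not> \<rho> \<subseteq> \<sigma> \<longrightarrow> m \<bullet> ray_gen \<rho> > - a \<rho>)))"

definition projective_fan :: "(real^'n) set set \<Rightarrow> bool" where
  "projective_fan \<Sigma> \<longleftrightarrow> complete_fan \<Sigma> \<and> (\<exists>a. ample_divisor \<Sigma> a)"

definition Gamma_R :: "(real^'n) set set \<Rightarrow> ((real^'n) set \<Rightarrow> real) set" where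
  "Gamma_R \<Sigma> = {v. (\<forall>\<rho>. \<rho> \<notin> rays \<Sigma> \<longrightarrow> v \<rho> = 0) \<and>
                     (\<Sum>\<rho>\<in>rays \<Sigma>. v \<rho> *\<^sub>R ray_gen \<rho>) = 0}"

definition ip :: "(real^'n) set set \<Rightarrow> ((real^'n) set \<Rightarrow> real) \<Rightarrow> ((real^'n) set \<Rightarrow> real) \<Rightarrow> real" where
  "ip \<Sigma> v w = (\<Sum>\<rho>\<in>rays \<Sigma>. v \<rho> * w \<rho>)"

definition nrm :: "(real^'n) set set \<Rightarrow> ((real^'n) set \<Rightarrow> real) \<Rightarrow> real" where
  "nrm \<Sigma> v = sqrt (ip \<Sigma> v v)"

definition chi_pair :: "(real^'n) set set \<Rightarrow> ((real^'n) set \<Rightarrow> real) \<Rightarrow> ((real^'n) set \<Rightarrow> real) \<Rightarrow> real" where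
  "chi_pair \<Sigma> a b = (\<Sum>\<rho>\<in>rays \<Sigma>. a \<rho> * b \<rho>)"

definition chi_star :: "(real^'n) set set \<Rightarrow> ((real^'n) set \<Rightarrow> real) \<Rightarrow> ((real^'n) set \<Rightarrow> real)" where
  "chi_star \<Sigma> a = (THE c. c \<in> Gamma_R \<Sigma> \<and> (\<forall>v\<in>Gamma_R \<Sigma>. ip \<Sigma> c v = chi_pair \<Sigma> a v))"

definition S_supp :: "(real^'n) set set \<Rightarrow> ((real^'n) set \<Rightarrow> complex) \<Rightarrow> (real^'n) set set" where
  "S_supp \<Sigma> x = {\<rho>\<in>rays \<Sigma>. x \<rho> \<noteq> 0}"

definition sigma_x :: "(real^'n) set set \<Rightarrow> ((real^'n) set \<Rightarrow> complex) \<Rightarrow> ((real^'n) set \<Rightarrow> real) set" where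
  "sigma_x \<Sigma> x = {v\<in>Gamma_R \<Sigma>. \<forall>\<rho>\<in>S_supp \<Sigma> x. v \<rho> \<ge> 0}"

definition W_sub :: "(real^'n) set set \<Rightarrow> (real^'n) set set \<Rightarrow> ((real^'n) set \<Rightarrow> real) set" where
  "W_sub \<Sigma> Z = {v\<in>Gamma_R \<Sigma>. \<forall>\<rho>\<in>Z. v \<rho> = 0}"

definition proj :: "(real^'n) set set \<Rightarrow> ((real^'n) set \<Rightarrow> real) set \<Rightarrow> ((real^'n) set \<Rightarrow> real) \<Rightarrow> ((real^'n) set \<Rightarrow> real)" where
  "proj \<Sigma> W v = (THE w. w \<in> W \<and> (\<forall>u\<in>W. ip \<Sigma> (\<lambda>\<rho>. v \<rho> - w \<rho>) u = 0))"

definition Lambda :: "(real^'n) set set \<Rightarrow> ((real^'n) set \<Rightarrow> real) \<Rightarrow> ((real^'n) set \<Rightarrow> complex) \<Rightarrow> ((real^'n) set \<Rightarrow> real) set" where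
  "Lambda \<Sigma> a x = {(\<lambda>\<rho>. - proj \<Sigma> (W_sub \<Sigma> Z) (chi_star \<Sigma> a) \<rho>) | Z.
      Z \<subseteq> S_supp \<Sigma> x \<and> (\<lambda>\<rho>. - proj \<Sigma> (W_sub \<Sigma> Z) (chi_star \<Sigma> a) \<rho>) \<in> sigma_x \<Sigma> x}"

definition M_fun :: "(real^'n) set set \<Rightarrow> ((real^'n) set \<Rightarrow> real) \<Rightarrow> ((real^'n) set \<Rightarrow> complex) \<Rightarrow> real" where
  "M_fun \<Sigma> a x = Inf {chi_pair \<Sigma> a l / nrm \<Sigma> l | l. l \<in> sigma_x \<Sigma> x \<and> l \<noteq> (\<lambda>_. 0)}"

definition adapted :: "(real^'n) set set \<Rightarrow> ((real^'n) set \<Rightarrow> real) \<Rightarrow> ((real^'n) set \<Rightarrow> complex) \<Rightarrow> ((real^'n) set \<Rightarrow> real) \<Rightarrow> bool" where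
  "adapted \<Sigma> a x l \<longleftrightarrow> l \<in> Gamma_R \<Sigma> \<and> l \<noteq> (\<lambda>_. 0) \<and> chi_pair \<Sigma> a l / nrm \<Sigma> l = M_fun \<Sigma> a x"

end

theory Submission
  imports Defs
begin

(* The candidates -Proj_{W_Z} chi_D^* are the points of the subspaces W_Z nearest to
   -chi_D^*.  Since sigma_x is cut out of Gamma(G)_R by finitely many sign conditions, the
   point v of sigma_x nearest to -chi_D^* is already the nearest point of one of the W_Z with
   Z contained in S_x; a descent on the number of nonvanishing coordinates finds such a Z
   without any compactness argument, so v lies in Lambda^D_x.  The variational inequality
   (chi_D^* + v, lambda) >= 0 on sigma_x, together with (chi_D^*, v) = -||v||^2 and
   Cauchy-Schwarz, gives <chi_D, lambda>/||lambda|| >= -||v|| with equality at v; for a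
   candidate lambda in Lambda^D_x equality forces ||lambda - v||^2 <= 0.
   All of this needs v <> 0, i.e. some lambda in sigma_x with <chi_D, lambda> < 0, and this
   is where instability enters: if x vanishes on the primitive collection C, write
   sum_{rho in C} u_rho as a nonnegative combination of the generators of a maximal cone
   tau containing it.  The resulting relation lies in sigma_x, and ampleness at tau (strict
   for some ray of C, as C is not contained in tau) makes its chi_D-weight negative. *)

section \<open>The inner product on R^Sigma(1)\<close>

lemma ip_commute: "ip S f g = ip S g f"
  unfolding ip_def by (simp add: mult.commute)

lemma ip_diff_left: "ip S (\<lambda>\<rho>. f \<rho> - g \<rho>) u = ip S f u - ip S g u"
  unfolding ip_def by (simp add: left_diff_distrib sum_subtractf)

lemma ip_add_left: "ip S (\<lambda>\<rho>. f \<rho> + g \<rho>) u = ip S f u + ip S g u"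
  unfolding ip_def by (simp add: distrib_right sum.distrib)

lemma ip_scale_left: "ip S (\<lambda>\<rho>. k * f \<rho>) u = k * ip S f u"
  unfolding ip_def by (simp add: sum_distrib_left mult.assoc)

lemma ip_sum_left: "ip S (\<lambda>\<rho>. \<Sum>h\<in>G. c h * h \<rho>) u = (\<Sum>h\<in>G. c h * ip S h u)"
  unfolding ip_def by (simp add: sum_distrib_left sum_distrib_right mult.assoc sum.swap[of _ G])

lemma ip_cong: "(\<And>\<rho>. \<rho> \<in> rays S \<Longrightarrow> f \<rho> = f' \<rho>) \<Longrightarrow> ip S f u = ip S f' u"
  unfolding ip_def by (intro sum.cong) auto

lemma ip_self_nonneg: "ip S f f \<ge> 0"
  unfolding ip_def by (simp add: sum_nonneg)

lemma ip_self_eq_0D: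
  assumes "finite (rays S)" "ip S f f = 0" "\<rho> \<in> rays S"
  shows "f \<rho> = 0"
  using assms unfolding ip_def by (simp add: sum_nonneg_eq_0_iff)

lemma ip_add_scaled_self:
  "ip S (\<lambda>\<rho>. f \<rho> + s * g \<rho>) (\<lambda>\<rho>. f \<rho> + s * g \<rho>)
     = ip S f f + 2 * s * ip S f g + s\<^sup>2 * ip S g g"
proof -
  have "(f \<rho> + s * g \<rho>) * (f \<rho> + s * g \<rho>)
      = f \<rho> * f \<rho> + 2 * s * (f \<rho> * g \<rho>) + s\<^sup>2 * (g \<rho> * g \<rho>)" for \<rho>
    by (simp add: algebra_simps power2_eq_square)
  then show ?thesis
    unfolding ip_def by (simp add: sum.distrib sum_distrib_left)
qed

lemma ip_Cauchy_Schwarz: "ip S f g \<le> nrm S f * nrm S g"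
proof -
  have "(ip S f g)\<^sup>2 \<le> ip S f f * ip S g g"
    using Cauchy_Schwarz_ineq_sum[of f g "rays S"] unfolding ip_def by (simp add: power2_eq_square)
  then have "\<bar>ip S f g\<bar> \<le> sqrt (ip S f f * ip S g g)"
    by (intro real_le_rsqrt) simp
  then show ?thesis
    unfolding nrm_def by (simp add: real_sqrt_mult)
qed

lemma orthogonal_residual_exists:
  assumes "finite (rays S)" "finite G"
  shows "\<exists>c. \<forall>g\<in>G. ip S (\<lambda>\<rho>. y \<rho> - (\<Sum>h\<in>G. c h * h \<rho>)) g = 0"
  using assms(2)
proof (induction G arbitrary: y rule: finite_induct)
  case empty
  then show ?case by simp
next
  case (insert b G)
  obtain c where c: "\<forall>g\<in>G. ip S (\<lambda>\<rho>. y \<rho> - (\<Sum>h\<in>G. c h * h \<rho>)) g = 0"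
    using insert.IH by blast
  obtain d where d: "\<forall>g\<in>G. ip S (\<lambda>\<rho>. b \<rho> - (\<Sum>h\<in>G. d h * h \<rho>)) g = 0"
    using insert.IH by blast
  define z where "z = (\<lambda>\<rho>. y \<rho> - (\<Sum>h\<in>G. c h * h \<rho>))"
  define e where "e = (\<lambda>\<rho>. b \<rho> - (\<Sum>h\<in>G. d h * h \<rho>))"
  define k where "k = ip S z e / ip S e e"
    \<comment> \<open>0 when e vanishes on the rays; then z is already orthogonal to e\<close>
  define r where "r = (\<lambda>\<rho>. z \<rho> - k * e \<rho>)"
  have "ip S z e = 0" if "ip S e e = 0"
  proof -
    have "ip S e z = ip S (\<lambda>_. 0) z"
      by (rule ip_cong) (use ip_self_eq_0D[OF assms(1) that] in blast)
    then show ?thesis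
      by (simp add: ip_commute ip_def)
  qed
  then have r_e: "ip S r e = 0"
    unfolding r_def by (simp add: ip_diff_left ip_scale_left) (simp add: k_def)
  have r_G: "\<forall>g\<in>G. ip S r g = 0"
    using c d unfolding r_def z_def e_def by (simp add: ip_diff_left ip_scale_left)
  have "b = (\<lambda>\<rho>. e \<rho> + (\<Sum>h\<in>G. d h * h \<rho>))"
    unfolding e_def by simp
  then have "ip S b r = ip S e r + (\<Sum>h\<in>G. d h * ip S h r)"
    by (simp only: ip_add_left ip_sum_left)
  also have "\<dots> = 0"
    using r_e r_G by (simp add: ip_commute[of S _ r])
  finally have r_b: "ip S r b = 0"
    by (simp add: ip_commute)
  define c' where "c' h = (if h = b then k else c h - k * d h)" for h
  have "(\<lambda>\<rho>. y \<rho> - (\<Sum>h\<in>insert b G. c' h * h \<rho>)) = r"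
  proof
    fix \<rho>
    have "(\<Sum>h\<in>insert b G. c' h * h \<rho>) = k * b \<rho> + (\<Sum>h\<in>G. (c h - k * d h) * h \<rho>)"
      using insert.hyps unfolding c'_def by simp (intro sum.cong, auto)
    also have "\<dots> = (\<Sum>h\<in>G. c h * h \<rho>) + k * e \<rho>"
      unfolding e_def
      by (simp add: left_diff_distrib sum_subtractf right_diff_distrib sum_distrib_left mult.assoc)
    finally show "y \<rho> - (\<Sum>h\<in>insert b G. c' h * h \<rho>) = r \<rho>"
      unfolding r_def z_def by simp
  qed
  then show ?case
    using r_b r_G by (intro exI[of _ c']) simp
qed

section \<open>Orthogonal projections onto the subspaces W_Z\<close>

lemma Gamma_R_lincomb:
  assumes "f \<in> Gamma_R S" "g \<in> Gamma_R S"
  shows "(\<lambda>\<rho>. \<alpha> * f \<rho> + \<beta> * g \<rho>) \<in> Gamma_R S"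
proof -
  have "(\<Sum>\<rho>\<in>rays S. (\<alpha> * f \<rho> + \<beta> * g \<rho>) *\<^sub>R ray_gen \<rho>)
      = \<alpha> *\<^sub>R (\<Sum>\<rho>\<in>rays S. f \<rho> *\<^sub>R ray_gen \<rho>) + \<beta> *\<^sub>R (\<Sum>\<rho>\<in>rays S. g \<rho> *\<^sub>R ray_gen \<rho>)"
    by (simp add: scaleR_add_left sum.distrib scaleR_sum_right)
  then show ?thesis
    using assms unfolding Gamma_R_def by auto
qed

lemma zero_in_Gamma_R: "(\<lambda>_. 0) \<in> Gamma_R S"
  unfolding Gamma_R_def by simp

lemma Gamma_R_zero_off_rays: "f \<in> Gamma_R S \<Longrightarrow> \<rho> \<notin> rays S \<Longrightarrow> f \<rho> = 0"
  unfolding Gamma_R_def by auto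

lemma Gamma_R_eqI:
  assumes "finite (rays S)" "f \<in> Gamma_R S" "g \<in> Gamma_R S"
    and "ip S (\<lambda>\<rho>. f \<rho> - g \<rho>) (\<lambda>\<rho>. f \<rho> - g \<rho>) = 0"
  shows "f = g"
proof
  fix \<rho>
  show "f \<rho> = g \<rho>"
    using ip_self_eq_0D[OF assms(1,4), of \<rho>]
      Gamma_R_zero_off_rays[OF assms(2), of \<rho>] Gamma_R_zero_off_rays[OF assms(3), of \<rho>]
    by (cases "\<rho> \<in> rays S") auto
qed

lemma Gamma_R_ip_self_pos:
  assumes "finite (rays S)" "l \<in> Gamma_R S" "l \<noteq> (\<lambda>_. 0)"
  shows "ip S l l > 0"
proof -
  have "ip S l l \<noteq> 0"
    using Gamma_R_eqI[OF assms(1,2) zero_in_Gamma_R] assms(3) by auto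
  then show ?thesis
    using ip_self_nonneg[of S l] by linarith
qed

lemma W_sub_empty: "W_sub S {} = Gamma_R S"
  unfolding W_sub_def by auto

lemma W_sub_subset_Gamma_R: "W_sub S Z \<subseteq> Gamma_R S"
  unfolding W_sub_def by auto

lemma W_sub_lincomb:
  assumes "f \<in> W_sub S Z" "g \<in> W_sub S Z"
  shows "(\<lambda>\<rho>. \<alpha> * f \<rho> + \<beta> * g \<rho>) \<in> W_sub S Z"
  using assms Gamma_R_lincomb unfolding W_sub_def by auto

lemma W_sub_diff:
  assumes "f \<in> W_sub S Z" "g \<in> W_sub S Z"
  shows "(\<lambda>\<rho>. f \<rho> - g \<rho>) \<in> W_sub S Z"
  using W_sub_lincomb[OF assms, of 1 "-1"] by simp

lemma W_sub_iff_orthogonal: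
  fixes S :: "(real^'n) set set"
  assumes "finite (rays S)" "Z \<subseteq> rays S" "\<forall>\<rho>. \<rho> \<notin> rays S \<longrightarrow> v \<rho> = 0"
  defines "G \<equiv> (\<lambda>z. \<lambda>\<rho>. if \<rho> = z then 1 else 0) ` Z \<union>
               range (\<lambda>i. \<lambda>\<rho>. if \<rho> \<in> rays S then ray_gen \<rho> $ i else (0::real))"
  shows "v \<in> W_sub S Z \<longleftrightarrow> (\<forall>g\<in>G. ip S v g = 0)"
proof -
  have coordinate: "ip S v (\<lambda>\<rho>. if \<rho> = z then 1 else 0) = v z" if "z \<in> Z" for z
    using that assms(1,2) unfolding ip_def by (auto simp: if_distrib cong: if_cong)
  have relation: "ip S v (\<lambda>\<rho>. if \<rho> \<in> rays S then ray_gen \<rho> $ i else 0)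
      = (\<Sum>\<rho>\<in>rays S. v \<rho> *\<^sub>R ray_gen \<rho>) $ i" for i
    unfolding ip_def by simp
  have "v \<in> W_sub S Z \<longleftrightarrow> (\<forall>z\<in>Z. v z = 0) \<and> (\<forall>i. (\<Sum>\<rho>\<in>rays S. v \<rho> *\<^sub>R ray_gen \<rho>) $ i = 0)"
    using assms(3) unfolding W_sub_def Gamma_R_def by (auto simp: vec_eq_iff)
  also have "\<dots> \<longleftrightarrow> (\<forall>g\<in>G. ip S v g = 0)"
    unfolding G_def using coordinate relation by auto
  finally show ?thesis .
qed

text \<open>W_Z is the orthogonal complement of the finite family G below, so the residual of y
  against G is its projection onto W_Z.\<close>

lemma orthogonal_projection_exists:
  fixes S :: "(real^'n) set set"
  assumes "finite (rays S)" "Z \<subseteq> rays S"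
  shows "\<exists>p\<in>W_sub S Z. \<forall>u\<in>W_sub S Z. ip S (\<lambda>\<rho>. y \<rho> - p \<rho>) u = 0"
proof -
  define G where "G \<equiv> (\<lambda>z. \<lambda>\<rho>. if \<rho> = z then 1 else 0) ` Z \<union>
               range (\<lambda>i. \<lambda>\<rho>. if \<rho> \<in> rays S then ray_gen \<rho> $ i else (0::real))"
  have "finite Z"
    using assms finite_subset by blast
  then have "finite G"
    unfolding G_def by simp
  then obtain c where c: "\<forall>g\<in>G. ip S (\<lambda>\<rho>. y \<rho> - (\<Sum>h\<in>G. c h * h \<rho>)) g = 0"
    using orthogonal_residual_exists[OF assms(1)] by blast
  define p where "p = (\<lambda>\<rho>. if \<rho> \<in> rays S then y \<rho> - (\<Sum>h\<in>G. c h * h \<rho>) else 0)"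
  have "ip S p g = ip S (\<lambda>\<rho>. y \<rho> - (\<Sum>h\<in>G. c h * h \<rho>)) g" for g
    by (rule ip_cong) (simp add: p_def)
  then have p_W: "p \<in> W_sub S Z"
    using W_sub_iff_orthogonal[OF assms, of p] c unfolding G_def p_def by auto
  have "ip S (\<lambda>\<rho>. y \<rho> - p \<rho>) u = 0" if u: "u \<in> W_sub S Z" for u
  proof -
    have u_G: "\<forall>g\<in>G. ip S u g = 0"
      using W_sub_iff_orthogonal[OF assms, of u] u W_sub_subset_Gamma_R Gamma_R_zero_off_rays
      unfolding G_def by blast
    have "ip S (\<lambda>\<rho>. y \<rho> - p \<rho>) u = ip S (\<lambda>\<rho>. \<Sum>h\<in>G. c h * h \<rho>) u"
      by (rule ip_cong) (simp add: p_def)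
    also have "\<dots> = 0"
      using u_G by (simp add: ip_sum_left ip_commute[of S _ u])
    finally show ?thesis .
  qed
  then show ?thesis
    using p_W by blast
qed

lemma orthogonal_projection_unique:
  assumes "finite (rays S)" "p \<in> W_sub S Z" "q \<in> W_sub S Z"
    and "\<forall>u\<in>W_sub S Z. ip S (\<lambda>\<rho>. y \<rho> - p \<rho>) u = 0"
    and "\<forall>u\<in>W_sub S Z. ip S (\<lambda>\<rho>. y \<rho> - q \<rho>) u = 0"
  shows "p = q"
proof (rule Gamma_R_eqI)
  let ?d = "\<lambda>\<rho>. p \<rho> - q \<rho>"
  have "?d \<in> W_sub S Z"
    using W_sub_diff assms(2,3) .
  then have "ip S (\<lambda>\<rho>. y \<rho> - q \<rho>) ?d - ip S (\<lambda>\<rho>. y \<rho> - p \<rho>) ?d = 0"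
    using assms(4,5) by simp
  then show "ip S ?d ?d = 0"
    by (simp add: ip_diff_left[symmetric])
qed (use assms W_sub_subset_Gamma_R in blast)+

lemma proj_W_sub:
  fixes S :: "(real^'n) set set"
  assumes "finite (rays S)" "Z \<subseteq> rays S"
  shows "proj S (W_sub S Z) y \<in> W_sub S Z"
    and "u \<in> W_sub S Z \<Longrightarrow> ip S (\<lambda>\<rho>. y \<rho> - proj S (W_sub S Z) y \<rho>) u = 0"
proof -
  have "\<exists>!p. p \<in> W_sub S Z \<and> (\<forall>u\<in>W_sub S Z. ip S (\<lambda>\<rho>. y \<rho> - p \<rho>) u = 0)"
    using orthogonal_projection_exists[OF assms] orthogonal_projection_unique[OF assms(1)] by blast
  then have "proj S (W_sub S Z) y \<in> W_sub S Z \<and>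
      (\<forall>u\<in>W_sub S Z. ip S (\<lambda>\<rho>. y \<rho> - proj S (W_sub S Z) y \<rho>) u = 0)"
    unfolding proj_def by (rule theI')
  then show "proj S (W_sub S Z) y \<in> W_sub S Z"
    and "u \<in> W_sub S Z \<Longrightarrow> ip S (\<lambda>\<rho>. y \<rho> - proj S (W_sub S Z) y \<rho>) u = 0"
    by auto
qed

lemma chi_pair_eq_ip: "chi_pair S a v = ip S a v"
  unfolding chi_pair_def ip_def ..

lemma chi_star_eq_proj: "chi_star S a = proj S (W_sub S {}) a"
  unfolding chi_star_def proj_def W_sub_empty chi_pair_eq_ip
  by (intro arg_cong[where f = The] ext) (auto simp: ip_diff_left)

lemma ip_chi_star:
  assumes "finite (rays S)" "v \<in> Gamma_R S"
  shows "ip S (chi_star S a) v = chi_pair S a v"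
  using proj_W_sub(2)[of S "{}" v a] assms
  by (simp add: chi_star_eq_proj W_sub_empty ip_diff_left chi_pair_eq_ip)

section \<open>The point of sigma_x nearest to -chi_D^*\<close>

text \<open>-Proj_{W_Z} c is the point of W_Z nearest to -c.\<close>

definition face_point ::
    "(real^'n) set set \<Rightarrow> ((real^'n) set \<Rightarrow> real) \<Rightarrow> (real^'n) set set \<Rightarrow> ((real^'n) set \<Rightarrow> real)"
  where "face_point S c Z = (\<lambda>\<rho>. - proj S (W_sub S Z) c \<rho>)"

definition dist_sq :: "(real^'n) set set \<Rightarrow> ((real^'n) set \<Rightarrow> real) \<Rightarrow> ((real^'n) set \<Rightarrow> real) \<Rightarrow> real"
  where "dist_sq S c l = ip S (\<lambda>\<rho>. c \<rho> + l \<rho>) (\<lambda>\<rho>. c \<rho> + l \<rho>)"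

lemma Lambda_eq:
  "Lambda S a x = {face_point S (chi_star S a) Z | Z.
     Z \<subseteq> S_supp S x \<and> face_point S (chi_star S a) Z \<in> sigma_x S x}"
  unfolding Lambda_def face_point_def ..

lemma S_supp_subset_rays: "S_supp S x \<subseteq> rays S"
  unfolding S_supp_def by auto

lemma sigma_x_subset_Gamma_R: "sigma_x S x \<subseteq> Gamma_R S"
  unfolding sigma_x_def by auto

lemma sigma_x_lincomb:
  assumes "f \<in> sigma_x S x" "g \<in> sigma_x S x" "\<alpha> \<ge> 0" "\<beta> \<ge> 0"
  shows "(\<lambda>\<rho>. \<alpha> * f \<rho> + \<beta> * g \<rho>) \<in> sigma_x S x"
  using assms Gamma_R_lincomb unfolding sigma_x_def by auto

lemma face_point_in_W_sub:
  assumes "finite (rays S)" "Z \<subseteq> rays S"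
  shows "face_point S c Z \<in> W_sub S Z"
  using W_sub_lincomb[OF proj_W_sub(1)[OF assms, of c] proj_W_sub(1)[OF assms, of c],
      where \<alpha> = "-1" and \<beta> = 0]
  unfolding face_point_def by simp

lemma face_point_orthogonal:
  assumes "finite (rays S)" "Z \<subseteq> rays S" "u \<in> W_sub S Z"
  shows "ip S (\<lambda>\<rho>. c \<rho> + face_point S c Z \<rho>) u = 0"
  using proj_W_sub(2)[OF assms] unfolding face_point_def by simp

lemma ip_face_point:
  assumes "finite (rays S)" "Z \<subseteq> rays S"
  shows "ip S c (face_point S c Z) = - ip S (face_point S c Z) (face_point S c Z)"
  using face_point_orthogonal[OF assms face_point_in_W_sub[OF assms, of c], of c]
  by (simp add: ip_add_left)

lemma dist_sq_add_scaled:
  "dist_sq S c (\<lambda>\<rho>. v \<rho> + s * g \<rho>)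
     = dist_sq S c v + 2 * s * ip S (\<lambda>\<rho>. c \<rho> + v \<rho>) g + s\<^sup>2 * ip S g g"
proof -
  have "(\<lambda>\<rho>. c \<rho> + (v \<rho> + s * g \<rho>)) = (\<lambda>\<rho>. (c \<rho> + v \<rho>) + s * g \<rho>)"
    by (simp add: add.assoc)
  then show ?thesis
    unfolding dist_sq_def by (simp add: ip_add_scaled_self)
qed

lemma dist_sq_face_point_add:
  assumes "finite (rays S)" "Z \<subseteq> rays S" "u \<in> W_sub S Z"
  shows "dist_sq S c (\<lambda>\<rho>. face_point S c Z \<rho> + t * u \<rho>) = dist_sq S c (face_point S c Z) + t\<^sup>2 * ip S u u"
  using face_point_orthogonal[OF assms] by (simp add: dist_sq_add_scaled)

lemma dist_sq_toward_face_point_le: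
  assumes fin: "finite (rays S)" and Z: "Z \<subseteq> rays S" and l: "l \<in> W_sub S Z"
    and s: "0 \<le> s" "s \<le> 1"
  shows "dist_sq S c (\<lambda>\<rho>. (1 - s) * l \<rho> + s * face_point S c Z \<rho>) \<le> dist_sq S c l"
proof -
  let ?v = "face_point S c Z"
  define \<delta> where "\<delta> = (\<lambda>\<rho>. l \<rho> - ?v \<rho>)"
  have "\<delta> \<in> W_sub S Z"
    unfolding \<delta>_def using W_sub_diff[OF l face_point_in_W_sub[OF fin Z]] .
  note dist_sq_\<delta> = dist_sq_face_point_add[OF fin Z this, of c]
  have "(\<lambda>\<rho>. (1 - s) * l \<rho> + s * ?v \<rho>) = (\<lambda>\<rho>. ?v \<rho> + (1 - s) * \<delta> \<rho>)"
    unfolding \<delta>_def by (simp add: algebra_simps)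
  then have "dist_sq S c (\<lambda>\<rho>. (1 - s) * l \<rho> + s * ?v \<rho>) = dist_sq S c ?v + (1 - s)\<^sup>2 * ip S \<delta> \<delta>"
    using dist_sq_\<delta> by simp
  also have "\<dots> \<le> dist_sq S c ?v + 1\<^sup>2 * ip S \<delta> \<delta>"
    using mult_right_mono[OF power_le_one[of "1 - s" 2] ip_self_nonneg[of S \<delta>]] s by simp
  also have "\<dots> = dist_sq S c l"
    using dist_sq_\<delta>[of 1] by (simp add: \<delta>_def)
  finally show ?thesis .
qed

lemma exit_point_of_segment:
  fixes l v :: "'a \<Rightarrow> real"
  assumes "finite T" "\<forall>\<rho>\<in>T. l \<rho> \<ge> 0" "\<exists>\<rho>\<in>T. v \<rho> < 0"
    and "\<forall>\<rho>\<in>T. v \<rho> < 0 \<longrightarrow> l \<rho> > 0"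
  shows "\<exists>s \<rho>\<^sub>0. 0 \<le> s \<and> s < 1 \<and> \<rho>\<^sub>0 \<in> T \<and> l \<rho>\<^sub>0 > 0 \<and> (1 - s) * l \<rho>\<^sub>0 + s * v \<rho>\<^sub>0 = 0 \<and>
    (\<forall>\<rho>\<in>T. (1 - s) * l \<rho> + s * v \<rho> \<ge> 0)"
proof -
  define N where "N = {\<rho>\<in>T. v \<rho> < 0}"
  define t where "t \<rho> = l \<rho> / (l \<rho> - v \<rho>)" for \<rho>
  have "finite N" "N \<noteq> {}"
    using assms(1,3) unfolding N_def by auto
  define \<rho>\<^sub>0 where "\<rho>\<^sub>0 = arg_min_on t N"
  have \<rho>\<^sub>0: "\<rho>\<^sub>0 \<in> N" "\<And>\<rho>. \<rho> \<in> N \<Longrightarrow> t \<rho>\<^sub>0 \<le> t \<rho>"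
    unfolding \<rho>\<^sub>0_def
    using arg_min_if_finite(1)[OF \<open>finite N\<close> \<open>N \<noteq> {}\<close>] arg_min_least[OF \<open>finite N\<close> \<open>N \<noteq> {}\<close>]
    by auto
  have l\<rho>\<^sub>0: "l \<rho>\<^sub>0 > 0" and v\<rho>\<^sub>0: "v \<rho>\<^sub>0 < 0" and "\<rho>\<^sub>0 \<in> T"
    using \<rho>\<^sub>0(1) assms(4) unfolding N_def by auto
  have nonneg: "(1 - t \<rho>\<^sub>0) * l \<rho> + t \<rho>\<^sub>0 * v \<rho> \<ge> 0" if "\<rho> \<in> T" for \<rho>
  proof (cases "v \<rho> < 0")
    case True
    then have "\<rho> \<in> N" "l \<rho> - v \<rho> > 0"
      using that assms(4) unfolding N_def by auto
    then have "t \<rho>\<^sub>0 \<le> l \<rho> / (l \<rho> - v \<rho>)"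
      using \<rho>\<^sub>0(2)[OF \<open>\<rho> \<in> N\<close>] by (simp only: t_def[of \<rho>])
    then have "t \<rho>\<^sub>0 * (l \<rho> - v \<rho>) \<le> l \<rho>"
      using \<open>l \<rho> - v \<rho> > 0\<close> by (simp add: le_divide_eq)
    then show ?thesis
      by (simp add: algebra_simps)
  next
    case False
    have "0 \<le> t \<rho>\<^sub>0" "t \<rho>\<^sub>0 < 1"
      using l\<rho>\<^sub>0 v\<rho>\<^sub>0 unfolding t_def by (auto simp: field_simps)
    then show ?thesis
      using False assms(2) that by simp
  qed
  show ?thesis
    using l\<rho>\<^sub>0 v\<rho>\<^sub>0 \<open>\<rho>\<^sub>0 \<in> T\<close> nonneg
    by (intro exI[of _ "t \<rho>\<^sub>0"] exI[of _ \<rho>\<^sub>0]) (auto simp: t_def field_simps)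
qed

text \<open>mu is the point where the segment from l towards face_point S c A, for A the zero set of
  l on S_x, leaves sigma_x.\<close>

lemma nearer_point_with_more_zeros:
  assumes fin: "finite (rays S)" and l: "l \<in> sigma_x S x"
    and out: "face_point S c {\<rho>\<in>S_supp S x. l \<rho> = 0} \<notin> sigma_x S x"
  shows "\<exists>\<mu>\<in>sigma_x S x. {\<rho>\<in>S_supp S x. l \<rho> = 0} \<subset> {\<rho>\<in>S_supp S x. \<mu> \<rho> = 0} \<and>
    dist_sq S c \<mu> \<le> dist_sq S c l"
proof -
  define A where "A = {\<rho>\<in>S_supp S x. l \<rho> = 0}"
  define v where "v = face_point S c A"
  have A: "A \<subseteq> rays S"
    using S_supp_subset_rays unfolding A_def by blast
  have v_W: "v \<in> W_sub S A"
    unfolding v_def by (rule face_point_in_W_sub[OF fin A])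
  have l_Gamma: "l \<in> Gamma_R S" and l_nonneg: "\<forall>\<rho>\<in>S_supp S x. l \<rho> \<ge> 0"
    using l unfolding sigma_x_def by auto
  then have l_W: "l \<in> W_sub S A"
    unfolding W_sub_def A_def by auto
  have v_Gamma: "v \<in> Gamma_R S"
    using v_W W_sub_subset_Gamma_R by blast
  then have "\<exists>\<rho>\<in>S_supp S x. v \<rho> < 0"
    using out unfolding sigma_x_def v_def A_def by (auto simp: not_le)
  moreover have "l \<rho> > 0" if "\<rho> \<in> S_supp S x" "v \<rho> < 0" for \<rho>
  proof -
    have "\<rho> \<notin> A"
      using v_W that(2) unfolding W_sub_def by auto
    then show ?thesis
      using l_nonneg that(1) unfolding A_def by (simp add: less_le)
  qed
  ultimately obtain s \<rho>\<^sub>0 where s: "0 \<le> s" "s < 1" and \<rho>\<^sub>0: "\<rho>\<^sub>0 \<in> S_supp S x" "l \<rho>\<^sub>0 > 0"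
      "(1 - s) * l \<rho>\<^sub>0 + s * v \<rho>\<^sub>0 = 0"
    and \<mu>_nonneg: "\<forall>\<rho>\<in>S_supp S x. (1 - s) * l \<rho> + s * v \<rho> \<ge> 0"
    using exit_point_of_segment[of "S_supp S x" l v] l_nonneg
      finite_subset[OF S_supp_subset_rays fin] by blast
  define \<mu> where "\<mu> = (\<lambda>\<rho>. (1 - s) * l \<rho> + s * v \<rho>)"
  have "\<mu> \<in> sigma_x S x"
    unfolding \<mu>_def sigma_x_def using Gamma_R_lincomb[OF l_Gamma v_Gamma] \<mu>_nonneg by blast
  moreover have "A \<subset> {\<rho>\<in>S_supp S x. \<mu> \<rho> = 0}"
  proof -
    have "A \<subseteq> {\<rho>\<in>S_supp S x. \<mu> \<rho> = 0}"
      using v_W unfolding A_def \<mu>_def W_sub_def by auto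
    moreover have "\<rho>\<^sub>0 \<in> {\<rho>\<in>S_supp S x. \<mu> \<rho> = 0} - A"
      using \<rho>\<^sub>0 unfolding A_def \<mu>_def by auto
    ultimately show ?thesis
      by blast
  qed
  moreover have "dist_sq S c \<mu> \<le> dist_sq S c l"
    using dist_sq_toward_face_point_le[OF fin A l_W, of s c] s unfolding \<mu>_def v_def by simp
  ultimately show ?thesis
    unfolding A_def by blast
qed

lemma exists_face_point_not_farther:
  assumes "finite (rays S)" "l \<in> sigma_x S x"
  shows "\<exists>Z\<subseteq>S_supp S x. face_point S c Z \<in> sigma_x S x \<and> dist_sq S c (face_point S c Z) \<le> dist_sq S c l"
  using assms(2)
proof (induction "card (S_supp S x - {\<rho>\<in>S_supp S x. l \<rho> = 0})" arbitrary: l rule: less_induct)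
  case less
  define A where "A = {\<rho>\<in>S_supp S x. l \<rho> = 0}"
  have A: "A \<subseteq> S_supp S x"
    unfolding A_def by blast
  show ?case
  proof (cases "face_point S c A \<in> sigma_x S x")
    case True
    have "l \<in> W_sub S A"
      using less.prems unfolding sigma_x_def W_sub_def A_def by auto
    then have "dist_sq S c (face_point S c A) \<le> dist_sq S c l"
      using dist_sq_toward_face_point_le[OF assms(1) subset_trans[OF A S_supp_subset_rays] _
          zero_le_one order_refl, of l c] by simp
    then show ?thesis
      using True A by blast
  next
    case False
    then obtain \<mu> where \<mu>: "\<mu> \<in> sigma_x S x" "A \<subset> {\<rho>\<in>S_supp S x. \<mu> \<rho> = 0}"
        "dist_sq S c \<mu> \<le> dist_sq S c l"
      using nearer_point_with_more_zeros[OF assms(1) less.prems] unfolding A_def by blast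
    have "finite (S_supp S x)"
      using assms(1) S_supp_subset_rays finite_subset by blast
    then have "card (S_supp S x - {\<rho>\<in>S_supp S x. \<mu> \<rho> = 0})
        < card (S_supp S x - {\<rho>\<in>S_supp S x. l \<rho> = 0})"
      using \<mu>(2) unfolding A_def by (intro psubset_card_mono) auto
    from less.hyps[OF this \<mu>(1)] obtain Z where "Z \<subseteq> S_supp S x"
        "face_point S c Z \<in> sigma_x S x" "dist_sq S c (face_point S c Z) \<le> dist_sq S c \<mu>"
      by blast
    then show ?thesis
      using \<mu>(3) by (meson order_trans)
  qed
qed

lemma nearest_face_point_exists:
  assumes "finite (rays S)"
  shows "\<exists>Z\<subseteq>S_supp S x. face_point S c Z \<in> sigma_x S x \<and>
    (\<forall>l\<in>sigma_x S x. dist_sq S c (face_point S c Z) \<le> dist_sq S c l)"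
proof -
  define F where "F = {Z. Z \<subseteq> S_supp S x \<and> face_point S c Z \<in> sigma_x S x}"
  define Z\<^sub>0 where "Z\<^sub>0 = arg_min_on (\<lambda>Z. dist_sq S c (face_point S c Z)) F"
  have "finite F"
    using finite_subset[OF S_supp_subset_rays assms] unfolding F_def by simp
  moreover have "(\<lambda>_. 0) \<in> sigma_x S x"
    unfolding sigma_x_def using zero_in_Gamma_R by simp
  then have "F \<noteq> {}"
    using exists_face_point_not_farther[OF assms] unfolding F_def by blast
  ultimately have Z\<^sub>0: "Z\<^sub>0 \<in> F" and min: "\<And>Z. Z \<in> F \<Longrightarrow>
      dist_sq S c (face_point S c Z\<^sub>0) \<le> dist_sq S c (face_point S c Z)"
    unfolding Z\<^sub>0_def by (auto intro: arg_min_if_finite(1) arg_min_least)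
  have "dist_sq S c (face_point S c Z\<^sub>0) \<le> dist_sq S c l" if l: "l \<in> sigma_x S x" for l
  proof -
    obtain Z where "Z \<in> F" "dist_sq S c (face_point S c Z) \<le> dist_sq S c l"
      using exists_face_point_not_farther[OF assms l] unfolding F_def by blast
    then show ?thesis
      using min by (meson order_trans)
  qed
  then show ?thesis
    using Z\<^sub>0 unfolding F_def by blast
qed

lemma nearest_point_variational_ineq:
  assumes v: "v \<in> sigma_x S x" and nearest: "\<forall>l\<in>sigma_x S x. dist_sq S c v \<le> dist_sq S c l"
    and l: "l \<in> sigma_x S x"
  shows "ip S (\<lambda>\<rho>. c \<rho> + v \<rho>) l \<ge> 0"
proof (rule ccontr)
  define e where "e = ip S (\<lambda>\<rho>. c \<rho> + v \<rho>) l"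
  assume "\<not> ?thesis"
  then have e: "e < 0"
    unfolding e_def by simp
  define t where "t = - e / (ip S l l + 1)"
  have t: "t > 0" "t * ip S l l \<le> - e"
    using e ip_self_nonneg[of S l] unfolding t_def by (auto simp: field_simps)
  have "(\<lambda>\<rho>. 1 * v \<rho> + t * l \<rho>) \<in> sigma_x S x"
    using sigma_x_lincomb[OF v l, of 1 t] t by simp
  then have "dist_sq S c v \<le> dist_sq S c (\<lambda>\<rho>. v \<rho> + t * l \<rho>)"
    using nearest by simp
  also have "\<dots> = dist_sq S c v + t * (2 * e + t * ip S l l)"
    unfolding dist_sq_add_scaled e_def by (simp add: power2_eq_square algebra_simps)
  finally have "0 \<le> 2 * e + t * ip S l l"
    using t by (simp add: zero_le_mult_iff)
  then show False
    using e t by linarith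
qed

section \<open>The minimum of the weight on sigma_x\<close>

lemma Lambda_chi_pair:
  assumes "finite (rays S)" "l \<in> Lambda S a x"
  shows "chi_pair S a l = - ip S l l"
proof -
  obtain Z where Z: "Z \<subseteq> rays S" and l: "l = face_point S (chi_star S a) Z"
    using assms(2) S_supp_subset_rays unfolding Lambda_eq by blast
  have "l \<in> Gamma_R S"
    unfolding l using face_point_in_W_sub[OF assms(1) Z] W_sub_subset_Gamma_R by blast
  then show ?thesis
    using ip_chi_star[OF assms(1)] ip_face_point[OF assms(1) Z] unfolding l by metis
qed

lemma chi_pair_div_nrm_eq:
  assumes "chi_pair S a l = - ip S l l"
  shows "chi_pair S a l / nrm S l = - nrm S l"
  using assms ip_self_nonneg[of S l] unfolding nrm_def by (simp add: real_div_sqrt)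

lemma chi_pair_nearest_ge:
  assumes fin: "finite (rays S)" and v: "v \<in> sigma_x S x"
    and nearest: "\<forall>l\<in>sigma_x S x. dist_sq S (chi_star S a) v \<le> dist_sq S (chi_star S a) l"
    and l: "l \<in> sigma_x S x"
  shows "chi_pair S a l + ip S v l \<ge> 0"
proof -
  have "ip S (chi_star S a) l = chi_pair S a l"
    using ip_chi_star[OF fin] l sigma_x_subset_Gamma_R by blast
  then show ?thesis
    using nearest_point_variational_ineq[OF v nearest l] by (simp add: ip_add_left)
qed

lemma M_fun_eq_neg_nrm:
  assumes fin: "finite (rays S)" and v: "v \<in> Lambda S a x"
    and nearest: "\<forall>l\<in>sigma_x S x. dist_sq S (chi_star S a) v \<le> dist_sq S (chi_star S a) l"
    and neg: "\<exists>l\<in>sigma_x S x. chi_pair S a l < 0"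
  shows "v \<noteq> (\<lambda>_. 0)" and "M_fun S a x = - nrm S v"
proof -
  have v_K: "v \<in> sigma_x S x"
    using v unfolding Lambda_eq by blast
  note ineq = chi_pair_nearest_ge[OF fin v_K nearest]
  show v0: "v \<noteq> (\<lambda>_. 0)"
    using ineq neg unfolding ip_def by fastforce
  have lower: "- nrm S v \<le> chi_pair S a l / nrm S l" if l: "l \<in> sigma_x S x" "l \<noteq> (\<lambda>_. 0)" for l
  proof -
    have "ip S l l > 0"
      using Gamma_R_ip_self_pos[OF fin _ l(2)] l(1) sigma_x_subset_Gamma_R by blast
    then have "nrm S l > 0"
      unfolding nrm_def by simp
    moreover have "- nrm S v * nrm S l \<le> chi_pair S a l"
      using ineq[OF l(1)] ip_Cauchy_Schwarz[of S v l] by linarith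
    ultimately show ?thesis
      by (simp add: field_simps)
  qed
  show "M_fun S a x = - nrm S v"
    unfolding M_fun_def
  proof (rule cInf_eq_minimum)
    show "- nrm S v \<in> {chi_pair S a l / nrm S l |l. l \<in> sigma_x S x \<and> l \<noteq> (\<lambda>_. 0)}"
      using chi_pair_div_nrm_eq[OF Lambda_chi_pair[OF fin v]] v_K v0 by (intro CollectI exI[of _ v]) simp
  qed (use lower in blast)
qed

lemma adapted_Lambda_unique:
  assumes fin: "finite (rays S)" and v: "v \<in> sigma_x S x"
    and nearest: "\<forall>l\<in>sigma_x S x. dist_sq S (chi_star S a) v \<le> dist_sq S (chi_star S a) l"
    and M: "M_fun S a x = - nrm S v"
    and l: "l \<in> Lambda S a x" "adapted S a x l"
  shows "l = v"
proof (rule Gamma_R_eqI[OF fin])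
  have l_K: "l \<in> sigma_x S x"
    using l(1) unfolding Lambda_eq by blast
  show "l \<in> Gamma_R S" "v \<in> Gamma_R S"
    using l_K v sigma_x_subset_Gamma_R by blast+
  have l_chi: "chi_pair S a l = - ip S l l"
    using Lambda_chi_pair[OF fin l(1)] .
  have "nrm S l = nrm S v"
    using chi_pair_div_nrm_eq[OF l_chi] l(2) M unfolding adapted_def by simp
  then have "ip S l l = ip S v v"
    unfolding nrm_def using ip_self_nonneg[of S l] ip_self_nonneg[of S v] by simp
  moreover have "ip S l l \<le> ip S v l"
    using chi_pair_nearest_ge[OF fin v nearest l_K] l_chi by simp
  moreover have "ip S (\<lambda>\<rho>. l \<rho> - v \<rho>) (\<lambda>\<rho>. l \<rho> - v \<rho>) = ip S l l - 2 * ip S v l + ip S v v"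
    by (simp add: ip_diff_left ip_commute[of S _ "\<lambda>\<rho>. l \<rho> - v \<rho>"] ip_commute[of S l v])
  ultimately show "ip S (\<lambda>\<rho>. l \<rho> - v \<rho>) (\<lambda>\<rho>. l \<rho> - v \<rho>) = 0"
    using ip_self_nonneg[of S "\<lambda>\<rho>. l \<rho> - v \<rho>"] by linarith
qed

section \<open>Cones of a fan and their rays\<close>

lemma gen_cone_iff: "y \<in> gen_cone S \<longleftrightarrow> (\<exists>c. (\<forall>s\<in>S. c s \<ge> 0) \<and> y = (\<Sum>s\<in>S. c s *\<^sub>R s))"
  unfolding gen_cone_def by auto

lemma zero_in_gen_cone: "0 \<in> gen_cone S"
  unfolding gen_cone_iff by (intro exI[of _ "\<lambda>_. 0"]) simp

lemma gen_cone_add: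
  assumes "y \<in> gen_cone S" "z \<in> gen_cone S"
  shows "y + z \<in> gen_cone S"
proof -
  obtain c d where "\<forall>s\<in>S. c s \<ge> 0" "y = (\<Sum>s\<in>S. c s *\<^sub>R s)" "\<forall>s\<in>S. d s \<ge> 0" "z = (\<Sum>s\<in>S. d s *\<^sub>R s)"
    using assms unfolding gen_cone_iff by blast
  then show ?thesis
    unfolding gen_cone_iff by (intro exI[of _ "\<lambda>s. c s + d s"]) (auto simp: scaleR_add_left sum.distrib)
qed

lemma gen_cone_scaleR:
  assumes "y \<in> gen_cone S" "k \<ge> 0"
  shows "k *\<^sub>R y \<in> gen_cone S"
proof -
  obtain c where "\<forall>s\<in>S. c s \<ge> 0" "y = (\<Sum>s\<in>S. c s *\<^sub>R s)"
    using assms unfolding gen_cone_iff by blast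
  then show ?thesis
    unfolding gen_cone_iff using assms(2) by (intro exI[of _ "\<lambda>s. k * c s"]) (auto simp: scaleR_sum_right)
qed

lemma generator_in_gen_cone:
  assumes "finite S" "s \<in> S"
  shows "s \<in> gen_cone S"
proof -
  have "s = (\<Sum>r\<in>S. (if r = s then 1 else 0) *\<^sub>R r)"
    using assms by (simp add: if_distrib[of "\<lambda>c. c *\<^sub>R _"] cong: if_cong)
  then show ?thesis
    unfolding gen_cone_iff by (intro exI[of _ "\<lambda>r. if r = s then 1 else 0"]) auto
qed

lemma gen_cone_mono:
  assumes "finite S" "T \<subseteq> S"
  shows "gen_cone T \<subseteq> gen_cone S"
proof
  fix y
  assume "y \<in> gen_cone T"
  then obtain c where c: "\<forall>s\<in>T. c s \<ge> 0" "y = (\<Sum>s\<in>T. c s *\<^sub>R s)"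
    unfolding gen_cone_iff by blast
  let ?c = "\<lambda>s. if s \<in> T then c s else 0"
  have "(\<Sum>s\<in>S. ?c s *\<^sub>R s) = (\<Sum>s\<in>T. c s *\<^sub>R s)"
    using assms by (simp add: if_distrib[of "\<lambda>c. c *\<^sub>R _"] sum.If_cases Int_absorb1 cong: if_cong)
  then show "y \<in> gen_cone S"
    unfolding gen_cone_iff using c by (intro exI[of _ ?c]) auto
qed

lemma gen_cone_remove_redundant:
  assumes "finite S" "s \<in> S" "s \<in> gen_cone (S - {s})"
  shows "gen_cone (S - {s}) = gen_cone S"
proof
  show "gen_cone (S - {s}) \<subseteq> gen_cone S"
    using gen_cone_mono assms by blast
  show "gen_cone S \<subseteq> gen_cone (S - {s})"
  proof
    fix y
    assume "y \<in> gen_cone S"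
    then obtain c where c: "\<forall>r\<in>S. c r \<ge> 0" "y = (\<Sum>r\<in>S. c r *\<^sub>R r)"
      unfolding gen_cone_iff by blast
    obtain d where d: "\<forall>r\<in>S - {s}. d r \<ge> 0" "s = (\<Sum>r\<in>S - {s}. d r *\<^sub>R r)"
      using assms(3) unfolding gen_cone_iff by blast
    have "y = c s *\<^sub>R s + (\<Sum>r\<in>S - {s}. c r *\<^sub>R r)"
      using c(2) assms by (simp add: sum.remove)
    also have "\<dots> = (\<Sum>r\<in>S - {s}. (c s * d r + c r) *\<^sub>R r)"
      by (subst (1) d(2)) (simp add: scaleR_sum_right scaleR_add_left sum.distrib)
    finally show "y \<in> gen_cone (S - {s})"
      unfolding gen_cone_iff using c(1) d(1) assms(2) by (intro exI[of _ "\<lambda>r. c s * d r + c r"]) auto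
  qed
qed

lemma gen_cone_irredundant_subset:
  fixes S :: "(real^'n) set"
  assumes "finite S"
  shows "\<exists>S'\<subseteq>S. gen_cone S' = gen_cone S \<and> (\<forall>s\<in>S'. s \<notin> gen_cone (S' - {s}))"
  using assms
proof (induction "card S" arbitrary: S rule: less_induct)
  case less
  show ?case
  proof (cases "\<exists>s\<in>S. s \<in> gen_cone (S - {s})")
    case True
    then obtain s where s: "s \<in> S" "s \<in> gen_cone (S - {s})"
      by blast
    then have "card (S - {s}) < card S"
      using card_Diff1_less[OF less.prems] by blast
    then obtain S' where "S' \<subseteq> S - {s}" "gen_cone S' = gen_cone (S - {s})"
        "\<forall>s\<in>S'. s \<notin> gen_cone (S' - {s})"
      using less.hyps[of "S - {s}"] less.prems by blast
    then show ?thesis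
      using gen_cone_remove_redundant[OF less.prems s] by auto
  qed blast
qed

lemma strongly_convex_eq_0:
  assumes "strongly_convex C" "z \<in> C" "- z \<in> C"
  shows "z = 0"
proof -
  have "z \<in> uminus ` C"
    using assms(3) by (metis image_eqI minus_minus)
  then show ?thesis
    using assms(1,2) unfolding strongly_convex_def by blast
qed

definition ray_through :: "'a::real_vector \<Rightarrow> 'a set" where
  "ray_through s = {t *\<^sub>R s | t. t \<ge> 0}"

lemma ray_through_iff: "y \<in> ray_through s \<longleftrightarrow> (\<exists>t\<ge>0. y = t *\<^sub>R s)"
  unfolding ray_through_def by auto

lemma zero_in_ray_through: "0 \<in> ray_through s"
  unfolding ray_through_iff by (intro exI[of _ 0]) simp

lemma self_in_ray_through: "s \<in> ray_through s"
  unfolding ray_through_iff by (intro exI[of _ 1]) simp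

lemma ray_through_scaleR: "y \<in> ray_through s \<Longrightarrow> c \<ge> 0 \<Longrightarrow> c *\<^sub>R y \<in> ray_through s"
  unfolding ray_through_iff by (metis scaleR_scaleR zero_le_mult_iff)

text \<open>Irredundancy of s makes the parts of p and q off s add up to a nonpositive multiple of s,
  and strong convexity then forces them to vanish.\<close>

lemma ray_through_summand:
  fixes S :: "(real^'n) set"
  assumes fin: "finite S" and sc: "strongly_convex (gen_cone S)" and sS: "s \<in> S"
    and irred: "s \<notin> gen_cone (S - {s})"
    and p: "p \<in> gen_cone S" and q: "q \<in> gen_cone S" and pq: "p + q \<in> ray_through s"
  shows "p \<in> ray_through s"
proof -
  obtain \<alpha> where \<alpha>: "\<forall>r\<in>S. \<alpha> r \<ge> 0" "p = (\<Sum>r\<in>S. \<alpha> r *\<^sub>R r)"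
    using p unfolding gen_cone_iff by blast
  obtain \<beta> where \<beta>: "\<forall>r\<in>S. \<beta> r \<ge> 0" "q = (\<Sum>r\<in>S. \<beta> r *\<^sub>R r)"
    using q unfolding gen_cone_iff by blast
  obtain t where t: "p + q = t *\<^sub>R s"
    using pq unfolding ray_through_iff by blast
  define P where "P = (\<Sum>r\<in>S - {s}. \<alpha> r *\<^sub>R r)"
  define Q where "Q = (\<Sum>r\<in>S - {s}. \<beta> r *\<^sub>R r)"
  have p_eq: "p = \<alpha> s *\<^sub>R s + P" and q_eq: "q = \<beta> s *\<^sub>R s + Q"
    unfolding P_def Q_def \<alpha>(2) \<beta>(2) using fin sS by (simp_all add: sum.remove)
  have P: "P \<in> gen_cone (S - {s})" and Q: "Q \<in> gen_cone (S - {s})"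
    unfolding P_def Q_def gen_cone_iff using \<alpha>(1) \<beta>(1) by auto
  have sub: "gen_cone (S - {s}) \<subseteq> gen_cone S"
    using gen_cone_mono[OF fin] by blast
  define k where "k = t - \<alpha> s - \<beta> s"
  have PQ: "P + Q = k *\<^sub>R s"
    using t p_eq q_eq unfolding k_def by (simp add: algebra_simps)
  have PQ_cone: "P + Q \<in> gen_cone (S - {s})"
    using gen_cone_add[OF P Q] .
  have "\<not> k > 0"
  proof
    assume "k > 0"
    then have "s = (1 / k) *\<^sub>R (P + Q)"
      using PQ by simp
    then show False
      using irred gen_cone_scaleR[OF PQ_cone, of "1 / k"] \<open>k > 0\<close> by simp
  qed
  then have "- (P + Q) \<in> gen_cone S"
    using PQ gen_cone_scaleR[OF generator_in_gen_cone[OF fin sS], of "- k"] by simp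
  then have "P + Q = 0"
    using strongly_convex_eq_0[OF sc] PQ_cone sub by blast
  then have "P = 0"
    using strongly_convex_eq_0[OF sc, of P] P Q sub by (metis add_eq_0_iff subsetD)
  then show ?thesis
    unfolding ray_through_iff using p_eq \<alpha>(1) sS by auto
qed

lemma ray_through_face_of_gen_cone:
  fixes S :: "(real^'n) set"
  assumes fin: "finite S" and sc: "strongly_convex (gen_cone S)" and sS: "s \<in> S"
    and irred: "s \<notin> gen_cone (S - {s})"
  shows "ray_through s face_of gen_cone S"
  unfolding face_of_def
proof (intro conjI ballI impI)
  show "ray_through s \<subseteq> gen_cone S"
    unfolding ray_through_def using gen_cone_scaleR[OF generator_in_gen_cone[OF fin sS]] by blast
  have "ray_through s = (\<lambda>t. t *\<^sub>R s) ` {0..}"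
    unfolding ray_through_def by auto
  then show "convex (ray_through s)"
    by (metis convex_linear_image convex_real_interval(1) linear_scaleR_left)
next
  fix a b z
  assume a: "a \<in> gen_cone S" and b: "b \<in> gen_cone S" and z: "z \<in> ray_through s"
    and "z \<in> open_segment a b"
  then obtain u where u: "0 < u" "u < 1" "z = (1 - u) *\<^sub>R a + u *\<^sub>R b"
    unfolding in_segment by blast
  have a': "(1 - u) *\<^sub>R a \<in> gen_cone S" and b': "u *\<^sub>R b \<in> gen_cone S"
    using gen_cone_scaleR[OF a] gen_cone_scaleR[OF b] u by simp_all
  have "(1 - u) *\<^sub>R a \<in> ray_through s"
    using ray_through_summand[OF fin sc sS irred a' b'] z u by simp
  from ray_through_scaleR[OF this, of "1 / (1 - u)"] show "a \<in> ray_through s"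
    using u by simp
  have "u *\<^sub>R b \<in> ray_through s"
    using ray_through_summand[OF fin sc sS irred b' a'] z u by (simp add: add.commute)
  from ray_through_scaleR[OF this, of "1 / u"] show "b \<in> ray_through s"
    using u by simp
qed

lemma aff_dim_ray_through:
  fixes s :: "'a::euclidean_space"
  assumes "s \<noteq> 0"
  shows "aff_dim (ray_through s) = 1"
proof -
  have "ray_through s \<subseteq> span {s}"
    unfolding ray_through_def by (auto intro: span_scale span_base)
  then have "span (ray_through s) = span {s}"
    using self_in_ray_through span_eq by (metis empty_subsetI insert_subset span_superset subset_trans)
  then have "dim (ray_through s) = 1"
    using assms by (metis dim_span dim_singleton)
  then show ?thesis
    using aff_dim_zero[OF hull_inc[OF zero_in_ray_through[of s]]] by simp
qed

lemma inj_on_ray_through_irredundant: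
  fixes S :: "(real^'n) set"
  assumes fin: "finite S" and irred: "\<forall>s\<in>S. s \<notin> gen_cone (S - {s})"
  shows "inj_on ray_through S"
proof (rule inj_onI, rule ccontr)
  fix s\<^sub>1 s\<^sub>2
  assume s: "s\<^sub>1 \<in> S" "s\<^sub>2 \<in> S" "ray_through s\<^sub>1 = ray_through s\<^sub>2" "s\<^sub>1 \<noteq> s\<^sub>2"
  then have "s\<^sub>2 \<in> ray_through s\<^sub>1"
    using self_in_ray_through[of s\<^sub>2] by simp
  then obtain t where "t \<ge> 0" "s\<^sub>2 = t *\<^sub>R s\<^sub>1"
    unfolding ray_through_iff by blast
  moreover have "s\<^sub>1 \<in> gen_cone (S - {s\<^sub>2})"
    using generator_in_gen_cone[of "S - {s\<^sub>2}" s\<^sub>1] fin s by auto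
  ultimately have "s\<^sub>2 \<in> gen_cone (S - {s\<^sub>2})"
    using gen_cone_scaleR by simp
  then show False
    using irred s(2) by blast
qed

lemma nonneg_Ints_imp_nat:
  assumes "(y::real) \<in> \<int>" "y \<ge> 0"
  shows "\<exists>m::nat. y = real m"
proof -
  obtain z where z: "y = of_int z"
    using assms(1) by (auto elim: Ints_cases)
  then have "y = real (nat z)"
    using assms(2) by simp
  then show ?thesis
    by blast
qed

lemma lattice_pt_diff: "lattice_pt a \<Longrightarrow> lattice_pt b \<Longrightarrow> lattice_pt (a - b)"
  unfolding lattice_pt_def by simp

lemma lattice_pt_scaleR_nat: "lattice_pt a \<Longrightarrow> lattice_pt (real k *\<^sub>R a)"
  unfolding lattice_pt_def by simp

lemma ray_gen_eqI:
  assumes v: "v \<in> \<rho>" "v \<noteq> 0" "lattice_pt v"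
    and multiple: "\<And>w. w \<in> \<rho> \<Longrightarrow> w \<noteq> 0 \<Longrightarrow> lattice_pt w \<Longrightarrow> \<exists>k::nat. w = real k *\<^sub>R v"
  shows "ray_gen \<rho> = v"
  unfolding ray_gen_def
proof (rule the_equality)
  fix v'
  assume v': "v' \<in> \<rho> \<and> v' \<noteq> 0 \<and> lattice_pt v' \<and>
    (\<forall>w. w \<in> \<rho> \<and> w \<noteq> 0 \<and> lattice_pt w \<longrightarrow> (\<exists>k::nat. w = real k *\<^sub>R v'))"
  then obtain k :: nat where k: "v' = real k *\<^sub>R v"
    using multiple by blast
  obtain k' :: nat where "v = real k' *\<^sub>R v'"
    using v' v by blast
  then have "(real k' * real k) *\<^sub>R v = 1 *\<^sub>R v"
    unfolding k by simp
  then have "real k' * real k = 1"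
    using v(2) scaleR_cancel_right by blast
  then have "k' * k = 1"
    by (metis of_nat_1 of_nat_eq_iff of_nat_mult)
  then show "v' = v"
    using k by simp
qed (use assms in blast)

text \<open>The primitive generator of the ray through a lattice point s is (k/N) s, where N is
  the absolute value of a nonzero coordinate of s and k is the least positive integer making
  this a lattice point; every lattice point m/N s of the ray is an integer multiple of it
  because (m mod k)/N s is again a lattice point.\<close>

lemma primitive_lattice_point_on_ray:
  fixes s :: "real^'n"
  assumes lat: "lattice_pt s" and s0: "s \<noteq> 0"
  shows "\<exists>\<mu>>0. lattice_pt (\<mu> *\<^sub>R s) \<and>
    (\<forall>w\<in>ray_through s. w \<noteq> 0 \<and> lattice_pt w \<longrightarrow> (\<exists>k::nat. w = real k *\<^sub>R (\<mu> *\<^sub>R s)))"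
proof -
  obtain i where "s $ i \<noteq> 0"
    using s0 by (metis vec_eq_iff zero_index)
  moreover obtain N :: nat where N: "\<bar>s $ i\<bar> = real N"
    using nonneg_Ints_imp_nat[of "\<bar>s $ i\<bar>"] lat unfolding lattice_pt_def by auto
  ultimately have N_pos: "N > 0"
    by auto
  define P where "P k \<longleftrightarrow> k > 0 \<and> lattice_pt ((real k / real N) *\<^sub>R s)" for k
  define k\<^sub>0 where "k\<^sub>0 = (LEAST k. P k)"
  have "P N"
    unfolding P_def using N_pos lat by simp
  then have "P k\<^sub>0"
    unfolding k\<^sub>0_def by (rule LeastI)
  then have k\<^sub>0: "k\<^sub>0 > 0" "lattice_pt ((real k\<^sub>0 / real N) *\<^sub>R s)"
    unfolding P_def by auto
  have multiple: "\<exists>k::nat. w = real k *\<^sub>R ((real k\<^sub>0 / real N) *\<^sub>R s)"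
    if w: "w \<in> ray_through s" "lattice_pt w" for w
  proof -
    obtain t where t: "w = t *\<^sub>R s" "t \<ge> 0"
      using w(1) unfolding ray_through_iff by blast
    obtain m :: nat where m: "\<bar>w $ i\<bar> = real m"
      using nonneg_Ints_imp_nat[of "\<bar>w $ i\<bar>"] w(2) unfolding lattice_pt_def by auto
    have "\<bar>w $ i\<bar> = t * real N"
      using t N by (simp add: abs_mult)
    then have t_eq: "t = real m / real N"
      using m N_pos by (simp add: field_simps)
    define q where "q = m div k\<^sub>0"
    define r where "r = m mod k\<^sub>0"
    have m_eq: "m = q * k\<^sub>0 + r"
      unfolding q_def r_def by simp
    then have "real r / real N = real m / real N - real q * (real k\<^sub>0 / real N)"
      using N_pos by (simp add: field_simps)
    then have "(real r / real N) *\<^sub>R s = w - real q *\<^sub>R ((real k\<^sub>0 / real N) *\<^sub>R s)"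
      unfolding t(1) t_eq by (simp only: scaleR_diff_left scaleR_scaleR)
    then have "lattice_pt ((real r / real N) *\<^sub>R s)"
      using lattice_pt_diff[OF w(2) lattice_pt_scaleR_nat[OF k\<^sub>0(2)]] by simp
    moreover have "r < k\<^sub>0"
      unfolding r_def using k\<^sub>0(1) by simp
    ultimately have "r = 0"
      using not_less_Least[of r P] unfolding k\<^sub>0_def P_def by auto
    then have "real m = real q * real k\<^sub>0"
      using m_eq by simp
    then have "w = real q *\<^sub>R ((real k\<^sub>0 / real N) *\<^sub>R s)"
      unfolding t(1) t_eq using N_pos by simp
    then show ?thesis
      by blast
  qed
  show ?thesis
    using k\<^sub>0 N_pos multiple by (intro exI[of _ "real k\<^sub>0 / real N"]) auto
qed

lemma ray_gen_ray_through:
  fixes s :: "real^'n"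
  assumes "lattice_pt s" "s \<noteq> 0"
  shows "\<exists>\<mu>>0. ray_gen (ray_through s) = \<mu> *\<^sub>R s"
proof -
  obtain \<mu> where \<mu>: "\<mu> > 0" "lattice_pt (\<mu> *\<^sub>R s)"
    and multiple: "\<forall>w\<in>ray_through s. w \<noteq> 0 \<and> lattice_pt w \<longrightarrow> (\<exists>k::nat. w = real k *\<^sub>R (\<mu> *\<^sub>R s))"
    using primitive_lattice_point_on_ray[OF assms] by blast
  have "ray_gen (ray_through s) = \<mu> *\<^sub>R s"
    using \<mu> assms(2) multiple ray_through_scaleR[OF self_in_ray_through, of \<mu> s]
    by (intro ray_gen_eqI) auto
  then show ?thesis
    using \<mu>(1) by blast
qed

lemma finite_rays: "is_fan \<Sigma> \<Longrightarrow> finite (rays \<Sigma>)"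
  unfolding is_fan_def rays_def by simp

lemma is_fanD:
  assumes "is_fan \<Sigma>" "\<sigma> \<in> \<Sigma>"
  shows "rational_polyhedral_cone \<sigma>" "strongly_convex \<sigma>"
    and "\<tau> face_of \<sigma> \<Longrightarrow> \<tau> \<noteq> {} \<Longrightarrow> \<tau> \<in> \<Sigma>"
  using assms unfolding is_fan_def by simp_all

lemma fan_cone_extremal_generators:
  fixes \<Sigma> :: "(real^'n) set set"
  assumes fan: "is_fan \<Sigma>" and \<sigma>: "\<sigma> \<in> \<Sigma>"
  obtains S where "finite S" "\<sigma> = gen_cone S" "inj_on ray_through S"
    and "\<And>s. s \<in> S \<Longrightarrow> ray_through s \<in> rays \<Sigma> \<and> ray_through s \<subseteq> \<sigma> \<and>
      (\<exists>\<mu>>0. ray_gen (ray_through s) = \<mu> *\<^sub>R s)"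
proof -
  obtain S\<^sub>0 where S\<^sub>0: "finite S\<^sub>0" "\<forall>s\<in>S\<^sub>0. lattice_pt s" "\<sigma> = gen_cone S\<^sub>0"
    using is_fanD(1)[OF fan \<sigma>] unfolding rational_polyhedral_cone_def by blast
  obtain S where S: "S \<subseteq> S\<^sub>0" "gen_cone S = gen_cone S\<^sub>0" and irred: "\<forall>s\<in>S. s \<notin> gen_cone (S - {s})"
    using gen_cone_irredundant_subset[OF S\<^sub>0(1)] by blast
  have fin: "finite S"
    using S(1) S\<^sub>0(1) finite_subset by blast
  have \<sigma>_eq: "\<sigma> = gen_cone S"
    using S S\<^sub>0 by simp
  have sc: "strongly_convex (gen_cone S)"
    using is_fanD(2)[OF fan \<sigma>] \<sigma>_eq by simp
  have nonzero: "s \<noteq> 0" if "s \<in> S" for s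
    using irred that zero_in_gen_cone by metis
  have lattice: "lattice_pt s" if "s \<in> S" for s
    using S(1) S\<^sub>0(2) that by blast
  have ray: "ray_through s \<in> rays \<Sigma> \<and> ray_through s \<subseteq> \<sigma>" if s: "s \<in> S" for s
  proof -
    have "ray_through s face_of \<sigma>"
      using ray_through_face_of_gen_cone[OF fin sc s] irred s \<sigma>_eq by simp
    then have "ray_through s \<in> \<Sigma>" "ray_through s \<subseteq> \<sigma>"
      using is_fanD(3)[OF fan \<sigma>] zero_in_ray_through face_of_imp_subset by blast+
    then show ?thesis
      unfolding rays_def using aff_dim_ray_through[OF nonzero[OF s]] by simp
  qed
  have "inj_on ray_through S"
    using inj_on_ray_through_irredundant[OF fin irred] .
  moreover have "\<exists>\<mu>>0. ray_gen (ray_through s) = \<mu> *\<^sub>R s" if s: "s \<in> S" for s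
    using ray_gen_ray_through[OF lattice[OF s] nonzero[OF s]] .
  ultimately show ?thesis
    using that[OF fin \<sigma>_eq] ray by blast
qed

lemma fan_cone_ray_gen_comb:
  fixes \<Sigma> :: "(real^'n) set set"
  assumes fan: "is_fan \<Sigma>" and \<sigma>: "\<sigma> \<in> \<Sigma>" and w: "w \<in> \<sigma>"
  shows "\<exists>coef. (\<forall>\<rho>. coef \<rho> \<ge> 0) \<and> (\<forall>\<rho>. coef \<rho> \<noteq> 0 \<longrightarrow> \<rho> \<in> rays \<Sigma> \<and> \<rho> \<subseteq> \<sigma>) \<and>
    w = (\<Sum>\<rho>\<in>rays \<Sigma>. coef \<rho> *\<^sub>R ray_gen \<rho>)"
proof -
  obtain S where fin: "finite S" and \<sigma>_eq: "\<sigma> = gen_cone S" and inj: "inj_on ray_through S"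
    and S: "\<And>s. s \<in> S \<Longrightarrow> ray_through s \<in> rays \<Sigma> \<and> ray_through s \<subseteq> \<sigma> \<and>
      (\<exists>\<mu>>0. ray_gen (ray_through s) = \<mu> *\<^sub>R s)"
    using fan_cone_extremal_generators[OF fan \<sigma>] by blast
  obtain \<mu> where \<mu>: "\<And>s. s \<in> S \<Longrightarrow> \<mu> s > 0 \<and> ray_gen (ray_through s) = \<mu> s *\<^sub>R s"
    using S by metis
  obtain c where c: "\<forall>s\<in>S. c s \<ge> 0" "w = (\<Sum>s\<in>S. c s *\<^sub>R s)"
    using w unfolding \<sigma>_eq gen_cone_iff by blast
  define g where "g = inv_into S ray_through"
  define coef where "coef \<rho> = (if \<rho> \<in> ray_through ` S then c (g \<rho>) / \<mu> (g \<rho>) else 0)" for \<rho>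
  have g: "g (ray_through s) = s" if "s \<in> S" for s
    unfolding g_def using inj that by (rule inv_into_f_f)
  have "coef \<rho> \<ge> 0" for \<rho>
  proof (cases "\<rho> \<in> ray_through ` S")
    case True
    then obtain s where "s \<in> S" "\<rho> = ray_through s"
      by blast
    then show ?thesis
      unfolding coef_def using g c(1) \<mu> by (simp add: less_imp_le)
  qed (simp add: coef_def)
  moreover have "\<rho> \<in> rays \<Sigma> \<and> \<rho> \<subseteq> \<sigma>" if "coef \<rho> \<noteq> 0" for \<rho>
    using that S unfolding coef_def by (auto split: if_splits)
  moreover have "(\<Sum>\<rho>\<in>rays \<Sigma>. coef \<rho> *\<^sub>R ray_gen \<rho>) = w"
  proof -
    have "(\<Sum>\<rho>\<in>rays \<Sigma>. coef \<rho> *\<^sub>R ray_gen \<rho>) = (\<Sum>\<rho>\<in>ray_through ` S. coef \<rho> *\<^sub>R ray_gen \<rho>)"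
      by (rule sum.mono_neutral_right) (use finite_rays[OF fan] S coef_def in auto)
    also have "\<dots> = (\<Sum>s\<in>S. coef (ray_through s) *\<^sub>R ray_gen (ray_through s))"
      by (rule sum.reindex[OF inj, unfolded comp_def])
    also have "\<dots> = (\<Sum>s\<in>S. c s *\<^sub>R s)"
    proof (rule sum.cong)
      fix s
      assume s: "s \<in> S"
      then have "coef (ray_through s) = c s / \<mu> s"
        using g unfolding coef_def by simp
      then show "coef (ray_through s) *\<^sub>R ray_gen (ray_through s) = c s *\<^sub>R s"
        using \<mu>[OF s] by simp
    qed simp
    finally show ?thesis
      using c(2) by simp
  qed
  ultimately show ?thesis
    by blast
qed

lemma exists_maximal_cone:
  assumes "finite \<Sigma>" "\<sigma> \<in> \<Sigma>"
  shows "\<exists>\<tau>. maximal_cone \<Sigma> \<tau> \<and> \<sigma> \<subseteq> \<tau>"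
proof -
  obtain \<tau> where "\<tau> \<in> {\<tau>\<in>\<Sigma>. \<sigma> \<subseteq> \<tau>}" "\<forall>\<tau>'\<in>{\<tau>\<in>\<Sigma>. \<sigma> \<subseteq> \<tau>}. \<tau> \<le> \<tau>' \<longrightarrow> \<tau> = \<tau>'"
    using finite_has_maximal[of "{\<tau>\<in>\<Sigma>. \<sigma> \<subseteq> \<tau>}"] assms by auto
  then show ?thesis
    unfolding maximal_cone_def by (blast dest: psubset_imp_subset)
qed

section \<open>Unstable points have a direction of negative weight\<close>

lemma complete_fan_ray_gen_comb:
  fixes \<Sigma> :: "(real^'n) set set"
  assumes "complete_fan \<Sigma>"
  obtains \<tau> coef where "maximal_cone \<Sigma> \<tau>" "\<forall>\<rho>. coef \<rho> \<ge> 0"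
    "\<forall>\<rho>. coef \<rho> \<noteq> 0 \<longrightarrow> \<rho> \<in> rays \<Sigma> \<and> \<rho> \<subseteq> \<tau>" "w = (\<Sum>\<rho>\<in>rays \<Sigma>. coef \<rho> *\<^sub>R ray_gen \<rho>)"
proof -
  have fan: "is_fan \<Sigma>" and "w \<in> \<Union>\<Sigma>"
    using assms unfolding complete_fan_def by simp_all
  then obtain \<sigma> where \<sigma>: "\<sigma> \<in> \<Sigma>" "w \<in> \<sigma>"
    by (meson UnionE)
  have "finite \<Sigma>"
    using fan unfolding is_fan_def by simp
  then obtain \<tau> where \<tau>: "maximal_cone \<Sigma> \<tau>" "\<sigma> \<subseteq> \<tau>"
    using exists_maximal_cone \<sigma>(1) by blast
  obtain coef where coef: "\<forall>\<rho>. coef \<rho> \<ge> 0" "\<forall>\<rho>. coef \<rho> \<noteq> 0 \<longrightarrow> \<rho> \<in> rays \<Sigma> \<and> \<rho> \<subseteq> \<sigma>"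
      "w = (\<Sum>\<rho>\<in>rays \<Sigma>. coef \<rho> *\<^sub>R ray_gen \<rho>)"
    using fan_cone_ray_gen_comb[OF fan \<sigma>] by blast
  have "\<forall>\<rho>. coef \<rho> \<noteq> 0 \<longrightarrow> \<rho> \<in> rays \<Sigma> \<and> \<rho> \<subseteq> \<tau>"
    using coef(2) \<tau>(2) by blast
  then show ?thesis
    using that[OF \<tau>(1) coef(1)] coef(3) by blast
qed

text \<open>Pairing the linear form m_tau of an ample divisor with both sides of the relation: equality
  on the rays of tau, strict inequality on a ray of C outside tau.\<close>

lemma ample_relation_weight_lt:
  assumes ample: "ample_divisor \<Sigma> a" and \<tau>: "maximal_cone \<Sigma> \<tau>"
    and C: "finite C" "C \<subseteq> rays \<Sigma>" "\<not> C \<subseteq> cone_rays \<Sigma> \<tau>"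
    and coef: "\<forall>\<rho>. coef \<rho> \<noteq> 0 \<longrightarrow> \<rho> \<in> rays \<Sigma> \<and> \<rho> \<subseteq> \<tau>"
    and relation: "(\<Sum>\<rho>\<in>C. ray_gen \<rho>) = (\<Sum>\<rho>\<in>rays \<Sigma>. coef \<rho> *\<^sub>R ray_gen \<rho>)"
  shows "(\<Sum>\<rho>\<in>rays \<Sigma>. a \<rho> * coef \<rho>) < (\<Sum>\<rho>\<in>C. a \<rho>)"
proof -
  obtain m where "\<forall>\<rho>\<in>rays \<Sigma>. (\<rho> \<subseteq> \<tau> \<longrightarrow> m \<bullet> ray_gen \<rho> = - a \<rho>) \<and>
      (\<not> \<rho> \<subseteq> \<tau> \<longrightarrow> m \<bullet> ray_gen \<rho> > - a \<rho>)"
    using ample \<tau> unfolding ample_divisor_def by blast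
  then have m: "\<And>\<rho>. \<rho> \<in> rays \<Sigma> \<Longrightarrow> \<rho> \<subseteq> \<tau> \<Longrightarrow> m \<bullet> ray_gen \<rho> = - a \<rho>"
      "\<And>\<rho>. \<rho> \<in> rays \<Sigma> \<Longrightarrow> \<not> \<rho> \<subseteq> \<tau> \<Longrightarrow> m \<bullet> ray_gen \<rho> > - a \<rho>"
    by blast+
  have "a \<rho> * coef \<rho> = - (coef \<rho> * (m \<bullet> ray_gen \<rho>))" for \<rho>
    using coef m(1)[of \<rho>] by (cases "coef \<rho> = 0") simp_all
  then have "(\<Sum>\<rho>\<in>rays \<Sigma>. a \<rho> * coef \<rho>) = (\<Sum>\<rho>\<in>rays \<Sigma>. - (coef \<rho> * (m \<bullet> ray_gen \<rho>)))"
    by simp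
  also have "\<dots> = - (m \<bullet> (\<Sum>\<rho>\<in>C. ray_gen \<rho>))"
    unfolding relation by (simp add: inner_sum_right sum_negf)
  also have "\<dots> = (\<Sum>\<rho>\<in>C. - (m \<bullet> ray_gen \<rho>))"
    by (simp add: inner_sum_right sum_negf)
  also have "\<dots> < (\<Sum>\<rho>\<in>C. a \<rho>)"
  proof (rule sum_strict_mono_ex1[OF C(1)])
    have "- (m \<bullet> ray_gen \<rho>) \<le> a \<rho>" if "\<rho> \<in> C" for \<rho>
      using m[OF subsetD[OF C(2) that]] by (cases "\<rho> \<subseteq> \<tau>") simp_all
    then show "\<forall>\<rho>\<in>C. - (m \<bullet> ray_gen \<rho>) \<le> a \<rho>"
      by blast
    obtain \<rho> where \<rho>: "\<rho> \<in> C" "\<not> \<rho> \<subseteq> \<tau>"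
      using C(2,3) unfolding cone_rays_def by blast
    then have "- (m \<bullet> ray_gen \<rho>) < a \<rho>"
      using m(2)[OF subsetD[OF C(2) \<rho>(1)] \<rho>(2)] by simp
    then show "\<exists>\<rho>\<in>C. - (m \<bullet> ray_gen \<rho>) < a \<rho>"
      using \<rho>(1) by blast
  qed
  finally show ?thesis .
qed

lemma unstable_negative_weight:
  fixes \<Sigma> :: "(real^'n) set set"
  assumes fan: "complete_fan \<Sigma>" and unstable: "x \<in> unstable_locus \<Sigma>"
    and ample: "ample_divisor \<Sigma> a"
  shows "\<exists>l\<in>sigma_x \<Sigma> x. chi_pair \<Sigma> a l < 0"
proof -
  have fin: "finite (rays \<Sigma>)"
    using fan finite_rays unfolding complete_fan_def by blast
  obtain C where C: "primitive_collection \<Sigma> C" and x_C: "\<forall>\<rho>\<in>C. x \<rho> = 0"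
    using unstable unfolding unstable_locus_def by blast
  have C_rays: "C \<subseteq> rays \<Sigma>"
    using C unfolding primitive_collection_def by blast
  have "finite C"
    using C_rays fin finite_subset by blast
  obtain \<tau> coef where \<tau>: "maximal_cone \<Sigma> \<tau>" and coef: "\<forall>\<rho>. coef \<rho> \<ge> 0"
      "\<forall>\<rho>. coef \<rho> \<noteq> 0 \<longrightarrow> \<rho> \<in> rays \<Sigma> \<and> \<rho> \<subseteq> \<tau>"
    and relation: "(\<Sum>\<rho>\<in>C. ray_gen \<rho>) = (\<Sum>\<rho>\<in>rays \<Sigma>. coef \<rho> *\<^sub>R ray_gen \<rho>)"
    by (rule complete_fan_ray_gen_comb[OF fan])
  have "\<tau> \<in> \<Sigma>"
    using \<tau> unfolding maximal_cone_def by simp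
  then have "\<not> C \<subseteq> cone_rays \<Sigma> \<tau>"
    using C unfolding primitive_collection_def by simp
  define l where "l \<rho> = (if \<rho> \<in> rays \<Sigma> then coef \<rho> - (if \<rho> \<in> C then 1 else 0) else 0)" for \<rho>
  have restrict_C: "(\<Sum>\<rho>\<in>rays \<Sigma>. if \<rho> \<in> C then f \<rho> else 0) = (\<Sum>\<rho>\<in>C. f \<rho>)" for f :: "_ \<Rightarrow> 'b::comm_monoid_add"
    using sum.inter_restrict[OF fin, of f C] C_rays by (simp add: Int_absorb1)
  have "(\<Sum>\<rho>\<in>rays \<Sigma>. l \<rho> *\<^sub>R ray_gen \<rho>)
      = (\<Sum>\<rho>\<in>rays \<Sigma>. coef \<rho> *\<^sub>R ray_gen \<rho>) - (\<Sum>\<rho>\<in>rays \<Sigma>. if \<rho> \<in> C then ray_gen \<rho> else 0)"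
    unfolding l_def by (simp add: scaleR_diff_left sum_subtractf if_distrib[of "\<lambda>c. c *\<^sub>R _"] cong: if_cong)
  also have "\<dots> = 0"
    unfolding restrict_C relation by simp
  finally have "l \<in> Gamma_R \<Sigma>"
    unfolding Gamma_R_def l_def by simp
  moreover have "l \<rho> \<ge> 0" if "\<rho> \<in> S_supp \<Sigma> x" for \<rho>
    using that x_C coef(1) unfolding S_supp_def l_def by auto
  ultimately have "l \<in> sigma_x \<Sigma> x"
    unfolding sigma_x_def by blast
  moreover have "chi_pair \<Sigma> a l = (\<Sum>\<rho>\<in>rays \<Sigma>. a \<rho> * coef \<rho>) - (\<Sum>\<rho>\<in>C. a \<rho>)"
    unfolding chi_pair_def l_def restrict_C[symmetric] sum_subtractf[symmetric]
    by (intro sum.cong) (auto simp: right_diff_distrib)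
  moreover have "(\<Sum>\<rho>\<in>rays \<Sigma>. a \<rho> * coef \<rho>) < (\<Sum>\<rho>\<in>C. a \<rho>)"
    using ample_relation_weight_lt[OF ample \<tau> \<open>finite C\<close> C_rays \<open>\<not> C \<subseteq> _\<close> coef(2) relation] .
  ultimately show ?thesis
    by (intro bexI[of _ l]) simp_all
qed

theorem theorem5p5:
  fixes \<Sigma> :: "(real^'n) set set"
    and x :: "(real^'n) set \<Rightarrow> complex"
    and a :: "(real^'n) set \<Rightarrow> real"
  assumes "projective_fan \<Sigma>"
    and "x \<in> unstable_locus \<Sigma>"
    and "ample_divisor \<Sigma> a"
  shows "(\<exists>!l. l \<in> Lambda \<Sigma> a x \<and> adapted \<Sigma> a x l) \<and>
         (\<forall>l. l \<in> Lambda \<Sigma> a x \<and> adapted \<Sigma> a x l \<longrightarrow> M_fun \<Sigma> a x = - nrm \<Sigma> l)"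
proof -
  have fan: "complete_fan \<Sigma>"
    using assms(1) unfolding projective_fan_def by blast
  then have fin: "finite (rays \<Sigma>)"
    using finite_rays unfolding complete_fan_def by blast
  obtain Z where "Z \<subseteq> S_supp \<Sigma> x" and v_K: "face_point \<Sigma> (chi_star \<Sigma> a) Z \<in> sigma_x \<Sigma> x"
    and nearest: "\<forall>l\<in>sigma_x \<Sigma> x. dist_sq \<Sigma> (chi_star \<Sigma> a) (face_point \<Sigma> (chi_star \<Sigma> a) Z)
      \<le> dist_sq \<Sigma> (chi_star \<Sigma> a) l"
    using nearest_face_point_exists[OF fin] by blast
  define v where "v = face_point \<Sigma> (chi_star \<Sigma> a) Z"
  have v_Lambda: "v \<in> Lambda \<Sigma> a x"
    unfolding v_def Lambda_eq using \<open>Z \<subseteq> _\<close> v_K by blast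
  have neg: "\<exists>l\<in>sigma_x \<Sigma> x. chi_pair \<Sigma> a l < 0"
    using unstable_negative_weight[OF fan assms(2,3)] .
  note M = M_fun_eq_neg_nrm[OF fin v_Lambda nearest[folded v_def] neg]
  have "v \<in> Gamma_R \<Sigma>"
    using v_K sigma_x_subset_Gamma_R unfolding v_def by blast
  moreover have "chi_pair \<Sigma> a v / nrm \<Sigma> v = M_fun \<Sigma> a x"
    using chi_pair_div_nrm_eq[OF Lambda_chi_pair[OF fin v_Lambda]] M(2) by simp
  ultimately have "adapted \<Sigma> a x v"
    unfolding adapted_def using M(1) by blast
  moreover have "l = v" if "l \<in> Lambda \<Sigma> a x" "adapted \<Sigma> a x l" for l
    using adapted_Lambda_unique[OF fin v_K[folded v_def] nearest[folded v_def] M(2) that] .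
  ultimately show ?thesis
    using v_Lambda M(2) by blast
qed

end
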